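(* Let $n\ge1$, $1\le p\le q<\infty$, $\alpha\in\mathbb{R}$ with $\alpha\le0$ if $p=q$, and let $Q_0\subset\mathbb{R}^n$ be a cube and $f\in L^1(Q_0)$. Then there exists a family $(Q_i)_{i\in I}\in S(Q_0)$ (depending on $f,p,q,\alpha$) such that for almost every $x\in Q_0$, $$M_{n(\frac1p-\frac1q),\alpha,Q_0}f(x)\le 2\max\Big\{1,e^{\frac1p-\frac1q-\alpha}\Big(\frac{pq\alpha}{q-p}\Big)^\alpha\Big\}\sum_{i\in I}\bigg(\frac{(1-(\log|Q_i|)_-)^\alpha}{|Q_i|^{\frac1{p'}+\frac1q}}\int_{Q_i}|f(y)|\,dy\bigg)\mathbf 1_{Q_i}(x),$$ where the maximum is interpreted as $1$ when $p=q$ or $\alpha<0$.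
   Context: Cubes have sides parallel to axes; $\mathcal{D}(Q_0)$ is the family of dyadic subcubes of $Q_0$. A countable $(Q_i)_{i\in I}\subset\mathcal{D}(Q_0)$ is sparse if there exist pairwise disjoint measurable $E_{Q_i}\subseteq Q_i$ with $|E_{Q_i}|\ge\frac12|Q_i|$; $S(Q_0)$ is the set of sparse families. $(a)_-=\min\{a,0\}$, natural logarithm, $p'$ the dual exponent. For $0\le\lambda<n$, $M_{\lambda,\alpha,Q_0}f(x)=\sup_{Q\in\mathcal{D}(Q_0),\,x\in Q}|Q|^{\frac\lambda n-1}(1-(\log|Q|)_-)^\alpha\int_Q|f|$. *)

theory Defs
  imports "HOL-Analysis.Analysis"
begin

definition cube :: "real^'n \<Rightarrow> real \<Rightarrow> (real^'n) set" where
  "cube a l = cbox a (a + l *\<^sub>R One)"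

definition dyadic_cubes :: "real^'n \<Rightarrow> real \<Rightarrow> (real^'n) set set" where
  "dyadic_cubes a l =
     {cube (a + (l / 2 ^ k) *\<^sub>R (\<chi> i. real (j i))) (l / 2 ^ k) | k j.
        \<forall>i. j i < (2::nat) ^ k}"

definition sparse :: "real^'n \<Rightarrow> real \<Rightarrow> (real^'n) set set \<Rightarrow> bool" where
  "sparse a l S \<longleftrightarrow> countable S \<and> S \<subseteq> dyadic_cubes a l \<and>
     (\<exists>E. (\<forall>Q\<in>S. E Q \<in> sets lebesgue \<and> E Q \<subseteq> Q \<and>
              measure lebesgue (E Q) \<ge> measure lebesgue Q / 2) \<and>
          disjoint_family_on E S)"

text \<open>(t)_- = min t 0\<close>
definition negpart :: "real \<Rightarrow> real" where
  "negpart t = min t 0"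

definition max_op :: "real \<Rightarrow> real \<Rightarrow> real^'n \<Rightarrow> real \<Rightarrow> (real^'n \<Rightarrow> real) \<Rightarrow> real^'n \<Rightarrow> ennreal" where
  "max_op lam \<alpha> a l f x =
     (SUP Q \<in> {Q \<in> dyadic_cubes a l. x \<in> Q}.
        ennreal (measure lebesgue Q powr (lam / real CARD('n) - 1)
                 * (1 - negpart (ln (measure lebesgue Q))) powr \<alpha>
                 * (LINT y:Q|lebesgue. \<bar>f y\<bar>)))"

text \<open>The constant 2 max{1, e^(1/p-1/q-alpha) (pq alpha/(q-p))^alpha}, with the
  maximum read as 1 if p = q or alpha < 0, and the convention 0^0 = 1.\<close>
definition sparse_const :: "real \<Rightarrow> real \<Rightarrow> real \<Rightarrow> real" where
  "sparse_const p q \<alpha> =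
     2 * (if p = q \<or> \<alpha> < 0 then 1
          else max 1 (exp (1/p - 1/q - \<alpha>) *
                 (if \<alpha> = 0 then 1 else (p * q * \<alpha> / (q - p)) powr \<alpha>)))"

end

theory Submission
  imports Defs
begin

(* Principal cubes (a stopping time). Call a dyadic cube principal if it is the root or its
   average of |f| exceeds twice the average over its nearest principal proper ancestor.
   Every dyadic cube Q then has a principal ancestor P with avg Q <= 2 avg P, and the weight
   w(t) = t^(1/p-1/q) (1 - (log t)_-)^alpha is almost increasing: w |Q| <= (K/2) w |P| for
   |Q| <= |P|, where K is the constant of the theorem (for alpha > 0 its value comes from the
   maximum of alpha log(1+u) - (1/p-1/q) u over u >= 0). So every term of the maximal function
   at x is at most K times the term of a principal cube containing x, at every point x.
   The principal cubes form a sparse family: the maximal principal subcubes of P have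
   averages > 2 avg P, so their union has measure at most |P|/2, and the sets E_P obtained by
   removing this union from P (taking half-open cubes) are pairwise disjoint. *)

section \<open>Logarithmic weights\<close>

definition log_weight :: "real \<Rightarrow> real \<Rightarrow> real \<Rightarrow> real" where
  "log_weight \<beta> \<alpha> t = t powr \<beta> * (1 - negpart (ln t)) powr \<alpha>"

lemma log_weight_nonneg: "0 \<le> log_weight \<beta> \<alpha> t"
  by (simp add: log_weight_def)

lemma log_weight_ge_one: "1 \<le> t \<Longrightarrow> 0 \<le> \<beta> \<Longrightarrow> 1 \<le> log_weight \<beta> \<alpha> t"
  by (simp add: log_weight_def negpart_def ge_one_powr_ge_zero)

lemma log_weight_less_one:
  assumes "0 < t" "t < 1"
  shows "log_weight \<beta> \<alpha> t = exp (\<alpha> * ln (1 - ln t) + \<beta> * ln t)"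
proof -
  have "ln t < 0" using assms by simp
  then have "negpart (ln t) = ln t" "ln t \<noteq> 1" by (simp_all add: negpart_def)
  then show ?thesis using assms by (simp add: log_weight_def powr_def exp_add)
qed

lemma log_weight_mono:
  assumes "\<alpha> \<le> 0" "0 \<le> \<beta>" "0 < s" "s \<le> t"
  shows "log_weight \<beta> \<alpha> s \<le> log_weight \<beta> \<alpha> t"
proof -
  have "1 - negpart (ln t) \<le> 1 - negpart (ln s)"
    using assms by (auto simp: negpart_def min_def)
  then have "(1 - negpart (ln s)) powr \<alpha> \<le> (1 - negpart (ln t)) powr \<alpha>"
    using assms(1) by (intro powr_mono2') (auto simp: negpart_def)
  moreover have "s powr \<beta> \<le> t powr \<beta>"
    using assms by (intro powr_mono2) auto
  ultimately show ?thesis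
    unfolding log_weight_def by (intro mult_mono) auto
qed

text \<open>With \<open>u = - ln t\<close>, the logarithm of \<open>log_weight \<beta> \<alpha> t\<close> for \<open>t < 1\<close> is the concave
  function \<open>\<alpha> ln (1 + u) - \<beta> u\<close>; the next three lemmas are the tangent-line bounds
  \<open>1 - 1/x \<le> ln x \<le> x - 1\<close> applied to it.\<close>

lemma log_one_plus_linear_le:
  fixes \<alpha> \<beta> u :: real
  assumes "0 < \<alpha>" "0 < \<beta>" "0 \<le> u"
  shows "\<alpha> * ln (1 + u) - \<beta> * u \<le> \<alpha> * ln (\<alpha> / \<beta>) + \<beta> - \<alpha>"
proof -
  have "ln ((1 + u) * \<beta> / \<alpha>) \<le> (1 + u) * \<beta> / \<alpha> - 1"
    using assms by (intro ln_le_minus_one) auto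
  then have "ln (1 + u) - ln (\<alpha> / \<beta>) \<le> (1 + u) * \<beta> / \<alpha> - 1"
    using assms by (simp add: ln_div ln_mult)
  then have "\<alpha> * (ln (1 + u) - ln (\<alpha> / \<beta>)) \<le> (1 + u) * \<beta> - \<alpha>"
    using assms by (simp add: field_simps)
  then show ?thesis by (simp add: algebra_simps)
qed

lemma log_one_plus_linear_antimono:
  fixes \<alpha> \<beta> u v :: real
  assumes "0 < \<alpha>" "0 \<le> u" "u \<le> v" "\<alpha> / (1 + u) \<le> \<beta>"
  shows "\<alpha> * ln (1 + v) - \<beta> * v \<le> \<alpha> * ln (1 + u) - \<beta> * u"
proof -
  have "ln ((1 + v) / (1 + u)) \<le> (1 + v) / (1 + u) - 1"
    using assms by (intro ln_le_minus_one) auto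
  then have "ln (1 + v) - ln (1 + u) \<le> (v - u) / (1 + u)"
    using assms by (simp add: ln_div field_simps)
  then have "\<alpha> * (ln (1 + v) - ln (1 + u)) \<le> \<alpha> * ((v - u) / (1 + u))"
    by (rule mult_left_mono) (use assms in auto)
  also have "\<dots> = (v - u) * (\<alpha> / (1 + u))"
    by simp
  also have "\<dots> \<le> (v - u) * \<beta>"
    using assms by (intro mult_left_mono) auto
  finally show ?thesis by (simp add: algebra_simps)
qed

lemma log_one_plus_linear_nonneg:
  fixes \<alpha> \<beta> u :: real
  assumes "0 < \<alpha>" "0 \<le> u" "\<beta> < \<alpha> / (1 + u)"
  shows "0 \<le> \<alpha> * ln (1 + u) - \<beta> * u"
proof -
  have "ln (1 / (1 + u)) \<le> 1 / (1 + u) - 1"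
    using assms by (intro ln_le_minus_one) auto
  then have "u / (1 + u) \<le> ln (1 + u)"
    using assms by (simp add: ln_div field_simps)
  then have "\<alpha> * (u / (1 + u)) \<le> \<alpha> * ln (1 + u)"
    by (rule mult_left_mono) (use assms in auto)
  then have "u * (\<alpha> / (1 + u)) \<le> \<alpha> * ln (1 + u)"
    by (simp add: mult.commute)
  moreover have "u * \<beta> \<le> u * (\<alpha> / (1 + u))"
    using assms by (intro mult_left_mono) auto
  ultimately show ?thesis by (simp add: algebra_simps)
qed

lemma log_weight_less_one_le:
  assumes "0 < \<alpha>" "0 < \<beta>" "0 < t" "t < 1"
  shows "log_weight \<beta> \<alpha> t \<le> exp (\<beta> - \<alpha>) * (\<alpha> / \<beta>) powr \<alpha>"
proof -
  have "\<alpha> * ln (1 - ln t) + \<beta> * ln t \<le> \<alpha> * ln (\<alpha> / \<beta>) + \<beta> - \<alpha>"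
    using log_one_plus_linear_le[OF assms(1,2), of "- ln t"] assms(3,4) by simp
  then show ?thesis
    using assms by (simp add: log_weight_less_one powr_def exp_add[symmetric] algebra_simps)
qed

lemma log_weight_dichotomy:
  assumes "0 < \<alpha>" "0 < \<beta>" "0 < s" "s \<le> t"
  shows "log_weight \<beta> \<alpha> s \<le> log_weight \<beta> \<alpha> t \<or> (s < 1 \<and> 1 \<le> log_weight \<beta> \<alpha> t)"
proof (cases "t < 1")
  case True
  define u v where "u = - ln t" and "v = - ln s"
  have uv: "0 \<le> u" "u \<le> v"
    using assms True by (auto simp: u_def v_def)
  have weights: "log_weight \<beta> \<alpha> t = exp (\<alpha> * ln (1 + u) - \<beta> * u)"
    "log_weight \<beta> \<alpha> s = exp (\<alpha> * ln (1 + v) - \<beta> * v)"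
    using assms True by (simp_all add: log_weight_less_one u_def v_def)
  show ?thesis
  proof (cases "\<alpha> / (1 + u) \<le> \<beta>")
    case True
    then show ?thesis
      using log_one_plus_linear_antimono[OF assms(1) uv True] by (simp add: weights)
  next
    case False
    then show ?thesis
      using log_one_plus_linear_nonneg[OF assms(1) uv(1)] \<open>t < 1\<close> assms by (simp add: weights)
  qed
next
  case False
  show ?thesis
  proof (cases "s < 1")
    case True
    then show ?thesis using False assms log_weight_ge_one[of t \<beta> \<alpha>] by simp
  next
    case False
    then have "s powr \<beta> \<le> t powr \<beta>" using assms by (intro powr_mono2) auto
    then show ?thesis using False assms by (simp add: log_weight_def negpart_def)
  qed
qed

lemma log_weight_times_average:
  "0 < m \<Longrightarrow> m powr (\<beta> - 1) * (1 - negpart (ln m)) powr \<alpha> * J = log_weight \<beta> \<alpha> m * (J / m)"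
  by (simp add: log_weight_def powr_diff)

lemma log_weight_times_average':
  assumes "0 < m"
  shows "(1 - negpart (ln m)) powr \<alpha> / m powr ((1 - 1/p) + 1/q) * J
    = log_weight (1/p - 1/q) \<alpha> m * (J / m)"
proof -
  have "(1 - 1/p) + 1/q = 1 - (1/p - 1/q)"
    by simp
  then have "m powr ((1 - 1/p) + 1/q) = m powr 1 / m powr (1/p - 1/q)"
    by (simp only: powr_diff)
  then have "m powr ((1 - 1/p) + 1/q) = m / m powr (1/p - 1/q)"
    using assms by simp
  then show ?thesis
    using assms by (simp add: log_weight_def)
qed

lemma sparse_const_ge_two: "2 \<le> sparse_const p q \<alpha>"
  by (simp add: sparse_const_def)

lemma half_sparse_const_eq:
  assumes "0 < p" "p < q" "0 < \<alpha>"
  shows "sparse_const p q \<alpha> / 2 = max 1 (exp ((1/p - 1/q) - \<alpha>) * (\<alpha> / (1/p - 1/q)) powr \<alpha>)"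
proof -
  have "p * q * \<alpha> / (q - p) = \<alpha> / (1/p - 1/q)"
    using assms by (simp add: field_simps)
  then show ?thesis
    using assms by (simp add: sparse_const_def)
qed

lemma log_weight_le_sparse_const:
  assumes "1 \<le> p" "p \<le> q" "p = q \<Longrightarrow> \<alpha> \<le> 0" "0 < s" "s \<le> t"
  shows "log_weight (1/p - 1/q) \<alpha> s \<le> sparse_const p q \<alpha> / 2 * log_weight (1/p - 1/q) \<alpha> t"
proof -
  define \<beta> where "\<beta> = 1/p - 1/q"
  have "0 \<le> \<beta>" using assms unfolding \<beta>_def by (simp add: frac_le)
  have "1 \<le> sparse_const p q \<alpha> / 2"
    using sparse_const_ge_two[of p q \<alpha>] by simp
  then have weight_le_const: "log_weight \<beta> \<alpha> t \<le> sparse_const p q \<alpha> / 2 * log_weight \<beta> \<alpha> t"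
    using mult_right_mono[of 1 "sparse_const p q \<alpha> / 2", OF _ log_weight_nonneg] by simp
  have "log_weight \<beta> \<alpha> s \<le> sparse_const p q \<alpha> / 2 * log_weight \<beta> \<alpha> t"
  proof (cases "\<alpha> \<le> 0")
    case True
    then have "log_weight \<beta> \<alpha> s \<le> log_weight \<beta> \<alpha> t"
      using \<open>0 \<le> \<beta>\<close> assms by (intro log_weight_mono) auto
    then show ?thesis
      using weight_le_const by linarith
  next
    case False
    define M where "M = exp (\<beta> - \<alpha>) * (\<alpha> / \<beta>) powr \<alpha>"
    have "p < q" "0 < \<alpha>" using assms False by force+
    then have "0 < \<beta>" using assms unfolding \<beta>_def by (simp add: frac_less2)
    have const: "sparse_const p q \<alpha> / 2 = max 1 M"
      using half_sparse_const_eq[of p q \<alpha>] assms(1) \<open>p < q\<close> \<open>0 < \<alpha>\<close> by (simp add: M_def \<beta>_def)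
    consider "log_weight \<beta> \<alpha> s \<le> log_weight \<beta> \<alpha> t" | "s < 1" "1 \<le> log_weight \<beta> \<alpha> t"
      using log_weight_dichotomy[OF \<open>0 < \<alpha>\<close> \<open>0 < \<beta>\<close> assms(4,5)] by blast
    then show ?thesis
    proof cases
      case 1
      then show ?thesis
        using weight_le_const by linarith
    next
      case 2
      then have "log_weight \<beta> \<alpha> s \<le> max 1 M"
        using log_weight_less_one_le[OF \<open>0 < \<alpha>\<close> \<open>0 < \<beta>\<close> assms(4)] unfolding M_def by simp
      also have "\<dots> \<le> max 1 M * log_weight \<beta> \<alpha> t"
        using 2 by (simp add: mult_le_cancel_left1)
      finally show ?thesis unfolding const .
    qed
  qed
  then show ?thesis unfolding \<beta>_def .
qed

section \<open>Principal ancestors of dyadic cubes\<close>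

text \<open>A dyadic subcube is indexed by its generation \<open>k\<close> and a multi-index \<open>j\<close> with
  \<open>j i < 2 ^ k\<close>; its ancestor of generation \<open>m \<le> k\<close> has index \<open>\<lambda>i. j i div 2 ^ (k - m)\<close>.\<close>

lemma ancestor_index_bounded_iff:
  fixes j :: "'i \<Rightarrow> nat"
  assumes "g \<le> k"
  shows "(\<forall>i. j i div 2 ^ (k - g) < 2 ^ g) \<longleftrightarrow> (\<forall>i. j i < 2 ^ k)"
proof -
  have "(2::nat) ^ k = 2 ^ g * 2 ^ (k - g)"
    using assms by (simp flip: power_add)
  then show ?thesis
    by (simp add: div_less_iff_less_mult)
qed

fun principal_ancestor ::
    "(nat \<Rightarrow> ('i \<Rightarrow> nat) \<Rightarrow> real) \<Rightarrow> nat \<Rightarrow> ('i \<Rightarrow> nat) \<Rightarrow> nat \<times> ('i \<Rightarrow> nat)" where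
  "principal_ancestor avg 0 j = (0, j)"
| "principal_ancestor avg (Suc k) j =
     (let P = principal_ancestor avg k (\<lambda>i. j i div 2)
      in if avg (Suc k) j > 2 * avg (fst P) (snd P) then (Suc k, j) else P)"

lemma principal_ancestor_Suc_cases:
  "principal_ancestor avg (Suc k) j = (Suc k, j) \<and>
     avg (Suc k) j > 2 * avg (fst (principal_ancestor avg k (\<lambda>i. j i div 2)))
                             (snd (principal_ancestor avg k (\<lambda>i. j i div 2)))
   \<or> principal_ancestor avg (Suc k) j = principal_ancestor avg k (\<lambda>i. j i div 2)"
  by (auto simp: Let_def)

lemma principal_ancestor_is_ancestor:
  "fst (principal_ancestor avg k j) \<le> k \<and>
   snd (principal_ancestor avg k j) = (\<lambda>i. j i div 2 ^ (k - fst (principal_ancestor avg k j)))"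
proof (induction k arbitrary: j)
  case 0
  then show ?case by simp
next
  case (Suc k)
  from principal_ancestor_Suc_cases[of avg k j] show ?case
  proof
    assume eq: "principal_ancestor avg (Suc k) j = principal_ancestor avg k (\<lambda>i. j i div 2)"
    obtain g where "fst (principal_ancestor avg k (\<lambda>i. j i div 2)) = g" "g \<le> k"
      using Suc.IH by blast
    then show ?case
      using Suc.IH[of "\<lambda>i. j i div 2"]
      by (simp add: eq Suc_diff_le div_mult2_eq mult.commute)
  qed auto
qed

lemma principal_ancestor_idem:
  "principal_ancestor avg (fst (principal_ancestor avg k j)) (snd (principal_ancestor avg k j))
   = principal_ancestor avg k j"
proof (induction k arbitrary: j)
  case 0
  then show ?case by simp
next
  case (Suc k)
  from principal_ancestor_Suc_cases[of avg k j] show ?case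
    using Suc.IH by auto
qed

lemma avg_le_principal_ancestor:
  assumes "\<And>k j. 0 \<le> avg k j"
  shows "avg k j \<le> 2 * avg (fst (principal_ancestor avg k j)) (snd (principal_ancestor avg k j))"
  using assms[of k j] by (cases k) (auto simp: Let_def)

lemma principal_ancestor_along_chain:
  assumes "principal_ancestor avg k j = (g, jP)" "g \<le> m" "m \<le> k"
  shows "principal_ancestor avg m (\<lambda>i. j i div 2 ^ (k - m)) = (g, jP)"
  using assms
proof (induction k arbitrary: j)
  case 0
  then show ?case by simp
next
  case (Suc k)
  show ?case
  proof (cases "m = Suc k")
    case False
    then have "principal_ancestor avg (Suc k) j \<noteq> (Suc k, j)"
      using Suc.prems by auto
    then have "principal_ancestor avg k (\<lambda>i. j i div 2) = (g, jP)"
      using principal_ancestor_Suc_cases[of avg k j] Suc.prems(1) by auto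
    then show ?thesis
      using Suc.IH[of "\<lambda>i. j i div 2"] Suc.prems False
      by (simp add: Suc_diff_le div_mult2_eq mult.commute)
  qed (use Suc.prems in simp)
qed

definition stopping_children ::
    "(nat \<Rightarrow> ('i \<Rightarrow> nat) \<Rightarrow> real) \<Rightarrow> nat \<Rightarrow> ('i \<Rightarrow> nat) \<Rightarrow> (nat \<times> ('i \<Rightarrow> nat)) set" where
  "stopping_children avg g jP = {(k, j). 0 < k \<and> principal_ancestor avg k j = (k, j) \<and>
     principal_ancestor avg (k - 1) (\<lambda>i. j i div 2) = (g, jP)}"

lemma stopping_child_descendant:
  assumes "(k, j) \<in> stopping_children avg g jP"
  shows "g < k" "jP = (\<lambda>i. j i div 2 ^ (k - g))"
proof -
  obtain k' where k: "k = Suc k'"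
    using assms by (cases k) (auto simp: stopping_children_def)
  have P: "principal_ancestor avg k' (\<lambda>i. j i div 2) = (g, jP)"
    using assms by (simp add: stopping_children_def k)
  from principal_ancestor_is_ancestor[of avg k' "\<lambda>i. j i div 2"]
  show "g < k" "jP = (\<lambda>i. j i div 2 ^ (k - g))"
    by (auto simp: P k Suc_diff_le div_mult2_eq mult.commute)
qed

lemma stopping_child_bounded:
  assumes "\<forall>i. jP i < 2 ^ g" "(k, j) \<in> stopping_children avg g jP"
  shows "\<forall>i. j i < 2 ^ k"
  using assms(1) ancestor_index_bounded_iff[of g k j] stopping_child_descendant[OF assms(2)]
  by simp

lemma stopping_child_avg_gt:
  assumes "(k, j) \<in> stopping_children avg g jP"
  shows "2 * avg g jP < avg k j"
proof -
  obtain k' where k: "k = Suc k'"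
    using assms by (cases k) (auto simp: stopping_children_def)
  have "principal_ancestor avg k' (\<lambda>i. j i div 2) = (g, jP)" "g \<noteq> k"
    using assms stopping_child_descendant[OF assms] by (auto simp: stopping_children_def k)
  then show ?thesis
    using principal_ancestor_Suc_cases[of avg k' j] assms by (auto simp: stopping_children_def k)
qed

lemma stopping_children_not_nested:
  assumes "(k1, j1) \<in> stopping_children avg g jP" "(k2, j2) \<in> stopping_children avg g jP"
    "k1 < k2"
  shows "j1 \<noteq> (\<lambda>i. j2 i div 2 ^ (k2 - k1))"
proof
  assume j1: "j1 = (\<lambda>i. j2 i div 2 ^ (k2 - k1))"
  have "g < k1"
    using stopping_child_descendant(1)[OF assms(1)] .
  have "principal_ancestor avg (k2 - 1) (\<lambda>i. j2 i div 2) = (g, jP)"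
    using assms(2) by (simp add: stopping_children_def)
  moreover have "k2 - k1 = Suc (k2 - 1 - k1)"
    using assms(3) by simp
  then have "(\<lambda>i. j2 i div 2 div 2 ^ (k2 - 1 - k1)) = j1"
    by (simp add: j1 div_mult2_eq)
  ultimately have "principal_ancestor avg k1 j1 = (g, jP)"
    using principal_ancestor_along_chain[of avg "k2 - 1" "\<lambda>i. j2 i div 2" g jP k1] \<open>g < k1\<close> assms(3)
    by simp
  moreover have "principal_ancestor avg k1 j1 = (k1, j1)"
    using assms(1) by (simp add: stopping_children_def)
  ultimately show False
    using \<open>g < k1\<close> by simp
qed

lemma exists_stopping_child_ancestor:
  assumes "principal_ancestor avg g jP = (g, jP)" "g < k" "jP = (\<lambda>i. j i div 2 ^ (k - g))"
    "principal_ancestor avg k j \<noteq> (g, jP)"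
  shows "\<exists>m\<le>k. (m, \<lambda>i. j i div 2 ^ (k - m)) \<in> stopping_children avg g jP"
  using assms(2-)
proof (induction k arbitrary: j)
  case 0
  then show ?case by simp
next
  case (Suc k)
  show ?case
  proof (cases "principal_ancestor avg k (\<lambda>i. j i div 2) = (g, jP)")
    case True
    then have "principal_ancestor avg (Suc k) j = (Suc k, j)"
      using principal_ancestor_Suc_cases[of avg k j] Suc.prems(3) by auto
    then have "(Suc k, j) \<in> stopping_children avg g jP"
      using True by (simp add: stopping_children_def)
    then show ?thesis by auto
  next
    case False
    then have "g < k"
      using Suc.prems assms(1) by (cases "g = k") auto
    then obtain m where "m \<le> k"
      "(m, \<lambda>i. j i div 2 div 2 ^ (k - m)) \<in> stopping_children avg g jP"
      using Suc.IH[of "\<lambda>i. j i div 2"] Suc.prems False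
      by (auto simp: Suc_diff_le div_mult2_eq mult.commute)
    then show ?thesis
      by (intro exI[of _ m]) (simp add: Suc_diff_le div_mult2_eq mult.commute)
  qed
qed

section \<open>The dyadic subcubes of a cube\<close>

lemma One_cart_nth: "(One :: real^'n) $ i = 1"
  by (simp add: cart_eq_inner_axis)

locale dyadic_grid =
  fixes a :: "real^'n" and l :: real
  assumes side_pos: "0 < l"
begin

definition dcube :: "nat \<Rightarrow> ('n \<Rightarrow> nat) \<Rightarrow> (real^'n) set" where
  "dcube k j = cube (a + (l / 2 ^ k) *\<^sub>R (\<chi> i. real (j i))) (l / 2 ^ k)"

definition grid_coord :: "nat \<Rightarrow> real^'n \<Rightarrow> 'n \<Rightarrow> real" where
  "grid_coord k x i = (x $ i - a $ i) * 2 ^ k / l"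

text \<open>The half-open version of \<open>dcube k j\<close>: the cubes of one generation are pairwise
  disjoint, and each differs from its closure by a null set.\<close>

definition hcube :: "nat \<Rightarrow> ('n \<Rightarrow> nat) \<Rightarrow> (real^'n) set" where
  "hcube k j = {x. \<forall>i. \<lfloor>grid_coord k x i\<rfloor> = int (j i)}"

lemma mem_dcube:
  "x \<in> dcube k j \<longleftrightarrow> (\<forall>i. real (j i) \<le> grid_coord k x i \<and> grid_coord k x i \<le> real (j i) + 1)"
proof -
  have "a $ i + l / 2 ^ k * real (j i) \<le> x $ i \<longleftrightarrow> real (j i) \<le> grid_coord k x i"
    "x $ i \<le> a $ i + l / 2 ^ k * real (j i) + l / 2 ^ k \<longleftrightarrow> grid_coord k x i \<le> real (j i) + 1"
    for i
    using side_pos by (simp_all add: grid_coord_def field_simps)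
  then show ?thesis
    unfolding dcube_def cube_def mem_box_cart vector_add_component vector_scaleR_component
      One_cart_nth vec_lambda_beta
    by (simp add: algebra_simps)
qed

lemma mem_hcube:
  "x \<in> hcube k j \<longleftrightarrow> (\<forall>i. real (j i) \<le> grid_coord k x i \<and> grid_coord k x i < real (j i) + 1)"
  by (simp add: hcube_def floor_eq_iff)

lemma hcube_subset_dcube: "hcube k j \<subseteq> dcube k j"
  by (auto simp: mem_hcube mem_dcube less_imp_le)

lemma dcube_diff_hcube_null: "dcube k j - hcube k j \<in> null_sets lebesgue"
proof -
  define H where "H i = {x::real^'n. x \<bullet> axis i 1 = a $ i + (real (j i) + 1) * l / 2 ^ k}" for i
  have "dcube k j - hcube k j \<subseteq> (\<Union>i. H i)"
  proof
    fix x assume x: "x \<in> dcube k j - hcube k j"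
    then obtain i where "\<not> (real (j i) \<le> grid_coord k x i \<and> grid_coord k x i < real (j i) + 1)"
      using mem_hcube[of x k j] by blast
    moreover have "real (j i) \<le> grid_coord k x i \<and> grid_coord k x i \<le> real (j i) + 1"
      using x mem_dcube[of x k j] by blast
    ultimately have "grid_coord k x i = real (j i) + 1"
      by linarith
    then have "x \<in> H i"
      using side_pos by (simp add: H_def grid_coord_def cart_eq_inner_axis[symmetric] field_simps)
    then show "x \<in> (\<Union>i. H i)" by blast
  qed
  moreover have "negligible (\<Union>i. H i)"
    unfolding H_def
    by (intro negligible_Union finite_imageI)
      (auto intro!: negligible_standard_hyperplane simp: axis_in_Basis_iff)
  ultimately show ?thesis
    using negligible_iff_null_sets negligible_subset by blast
qed

lemma dcube_lmeasurable: "dcube k j \<in> lmeasurable"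
  by (simp add: dcube_def cube_def)

lemma hcube_sets: "hcube k j \<in> sets lebesgue"
proof -
  have "hcube k j = dcube k j - (dcube k j - hcube k j)"
    using hcube_subset_dcube by blast
  then show ?thesis
    using dcube_diff_hcube_null dcube_lmeasurable by (metis fmeasurableD null_setsD2 sets.Diff)
qed

lemma measure_dcube_pos: "0 < measure lebesgue (dcube k j)"
proof -
  define u where "u = a + (l / 2 ^ k) *\<^sub>R (\<chi> i. real (j i))"
  have "cbox u (u + (l / 2 ^ k) *\<^sub>R One) \<noteq> {}"
    using side_pos unfolding interval_ne_empty_cart vector_add_component vector_scaleR_component
      One_cart_nth by simp
  then have "measure lebesgue (dcube k j) = (\<Prod>i\<in>UNIV. (u + (l / 2 ^ k) *\<^sub>R One) $ i - u $ i)"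
    unfolding dcube_def cube_def u_def[symmetric] measure_lborel_cbox_eq[symmetric]
    by (simp add: content_cbox_cart)
  also have "\<dots> = (l / 2 ^ k) ^ CARD('n)"
    unfolding vector_add_component vector_scaleR_component One_cart_nth by simp
  finally show ?thesis
    using side_pos by simp
qed

lemma emeasure_hcube: "emeasure lebesgue (hcube k j) = measure lebesgue (dcube k j)"
proof -
  have "hcube k j = dcube k j - (dcube k j - hcube k j)"
    using hcube_subset_dcube by blast
  then have "emeasure lebesgue (hcube k j) = emeasure lebesgue (dcube k j)"
    using emeasure_Diff_null_set[OF dcube_diff_hcube_null] dcube_lmeasurable
    by (metis fmeasurableD)
  then show ?thesis
    using dcube_lmeasurable by (simp add: emeasure_eq_measure2)
qed

lemma grid_coord_ancestor:
  "m \<le> k \<Longrightarrow> grid_coord m x i = grid_coord k x i / 2 ^ (k - m)"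
  by (simp add: grid_coord_def power_diff)

lemma hcube_ancestor:
  assumes "x \<in> hcube k j" "m \<le> k"
  shows "x \<in> hcube m (\<lambda>i. j i div 2 ^ (k - m))"
  using assms
  by (auto simp: hcube_def grid_coord_ancestor floor_divide_real_eq_div[of "2 ^ (k - m)", simplified]
      zdiv_int)

lemma hcube_index_eq:
  assumes "x \<in> hcube m j'" "x \<in> hcube k j" "m \<le> k"
  shows "j' = (\<lambda>i. j i div 2 ^ (k - m))"
  using assms hcube_ancestor[OF assms(2,3)] by (auto simp: hcube_def)

lemma dcube_ancestor:
  assumes "m \<le> k"
  shows "dcube k j \<subseteq> dcube m (\<lambda>i. j i div 2 ^ (k - m))"
proof
  fix x assume x: "x \<in> dcube k j"
  define D :: nat where "D = 2 ^ (k - m)"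
  have D: "0 < D" "grid_coord m x i = grid_coord k x i / D" for i
    using grid_coord_ancestor[OF assms] by (simp_all add: D_def)
  have "real (j i div D) \<le> grid_coord m x i \<and> grid_coord m x i \<le> real (j i div D) + 1" for i
  proof -
    have "j i div D * D \<le> j i" "j i + 1 \<le> (j i div D + 1) * D"
      using dividend_less_div_times[OF \<open>0 < D\<close>, of "j i"] by simp_all
    then have "real (j i div D) * D \<le> j i" "j i + 1 \<le> (real (j i div D) + 1) * D"
      by (metis of_nat_le_iff of_nat_mult of_nat_add of_nat_1)+
    then show ?thesis
      using x \<open>0 < D\<close> by (auto simp: mem_dcube D field_simps intro: order_trans)
  qed
  then show "x \<in> dcube m (\<lambda>i. j i div 2 ^ (k - m))"
    by (simp add: mem_dcube D_def)
qed

lemma dcube_root: "dcube 0 (\<lambda>_. 0) = cube a l"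
proof -
  have "(\<chi> i. 0) = (0 :: real^'n)"
    by (simp add: vec_eq_iff)
  then show ?thesis
    by (simp add: dcube_def)
qed

lemma dcube_subset_cube: "\<forall>i. j i < 2 ^ k \<Longrightarrow> dcube k j \<subseteq> cube a l"
  using dcube_ancestor[of 0 k j] by (simp add: div_less dcube_root[symmetric])

lemma dyadic_cubes_eq: "dyadic_cubes a l = {dcube k j | k j. \<forall>i. j i < 2 ^ k}"
  by (simp add: dyadic_cubes_def dcube_def)

end

section \<open>Principal cubes of an integrable function\<close>

lemma nn_integral_count_space_ge_point:
  assumes "s \<in> S"
  shows "h s \<le> (\<integral>\<^sup>+x. h x \<partial>count_space S)"
proof -
  have "h s = (\<integral>\<^sup>+x. h s * indicator {s} x \<partial>count_space S)"
    using assms by (simp add: nn_integral_cmult_indicator emeasure_count_space)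
  also have "\<dots> \<le> (\<integral>\<^sup>+x. h x \<partial>count_space S)"
    by (intro nn_integral_mono) (auto simp: indicator_def)
  finally show ?thesis .
qed

lemma sparse_image:
  assumes "countable I" "C ` I \<subseteq> dyadic_cubes a l"
    and "\<And>i. i \<in> I \<Longrightarrow> E i \<in> sets lebesgue \<and> E i \<subseteq> C i \<and>
                          measure lebesgue (C i) / 2 \<le> measure lebesgue (E i)"
    and "\<And>i i'. i \<in> I \<Longrightarrow> i' \<in> I \<Longrightarrow> i \<noteq> i' \<Longrightarrow> E i \<inter> E i' = {}"
  shows "sparse a l (C ` I)"
  unfolding sparse_def
proof (intro conjI exI[of _ "\<lambda>Q. E (inv_into I C Q)"])
  show "\<forall>Q\<in>C ` I. E (inv_into I C Q) \<in> sets lebesgue \<and> E (inv_into I C Q) \<subseteq> Q \<and>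
          measure lebesgue Q / 2 \<le> measure lebesgue (E (inv_into I C Q))"
    using assms(3) by (metis f_inv_into_f inv_into_into)
  show "disjoint_family_on (\<lambda>Q. E (inv_into I C Q)) (C ` I)"
    unfolding disjoint_family_on_def using assms(4) by (metis f_inv_into_f inv_into_into)
qed (use assms in auto)

locale dyadic_grid_integrable = dyadic_grid a l for a :: "real^'n" and l +
  fixes f :: "real^'n \<Rightarrow> real"
  assumes integrable_on_cube: "set_integrable lebesgue (cube a l) f"
begin

definition abs_integral :: "nat \<Rightarrow> ('n \<Rightarrow> nat) \<Rightarrow> real" where
  "abs_integral k j = (LINT y:dcube k j|lebesgue. \<bar>f y\<bar>)"

definition avg :: "nat \<Rightarrow> ('n \<Rightarrow> nat) \<Rightarrow> real" where
  "avg k j = abs_integral k j / measure lebesgue (dcube k j)"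

definition mass :: "(real^'n) measure" where
  "mass = density lebesgue (\<lambda>x. ennreal (indicator (cube a l) x * \<bar>f x\<bar>))"

lemma abs_integral_nonneg: "0 \<le> abs_integral k j"
  unfolding abs_integral_def set_lebesgue_integral_def
  by (rule Bochner_Integration.integral_nonneg) (simp add: indicator_def)

lemma avg_nonneg: "0 \<le> avg k j"
  using abs_integral_nonneg measure_dcube_pos by (simp add: avg_def)

lemma abs_integral_eq: "abs_integral k j = avg k j * measure lebesgue (dcube k j)"
  using measure_dcube_pos[of k j] by (simp add: avg_def)

lemma emeasure_mass_hcube:
  assumes "\<forall>i. j i < 2 ^ k"
  shows "emeasure mass (hcube k j) = ennreal (abs_integral k j)"
proof -
  have "integrable lebesgue (\<lambda>x. indicator (cube a l) x *\<^sub>R f x)"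
    using integrable_on_cube by (simp add: set_integrable_def)
  then have "(\<lambda>x. ennreal (\<bar>indicator (cube a l) x *\<^sub>R f x\<bar>)) \<in> borel_measurable lebesgue"
    by measurable
  moreover have "(\<lambda>x. \<bar>indicator (cube a l) x *\<^sub>R f x\<bar>) = (\<lambda>x. indicator (cube a l) x * \<bar>f x\<bar>)"
    by (auto simp: indicator_def)
  ultimately have "emeasure mass (hcube k j)
      = (\<integral>\<^sup>+x. ennreal (indicator (cube a l) x * \<bar>f x\<bar>) * indicator (hcube k j) x \<partial>lebesgue)"
    unfolding mass_def by (intro emeasure_density) (auto simp: hcube_sets)
  also have "\<dots> = (\<integral>\<^sup>+x. ennreal (\<bar>f x\<bar>) * indicator (dcube k j) x \<partial>lebesgue)"
  proof (intro nn_integral_cong_AE)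
    show "AE x in lebesgue. ennreal (indicator (cube a l) x * \<bar>f x\<bar>) * indicator (hcube k j) x
        = ennreal (\<bar>f x\<bar>) * indicator (dcube k j) x"
      using AE_not_in[OF dcube_diff_hcube_null[of k j]] hcube_subset_dcube[of k j]
        dcube_subset_cube[OF assms]
      by (auto elim!: eventually_mono simp: indicator_def)
  qed
  also have "\<dots> = ennreal (abs_integral k j)"
  proof -
    have "set_integrable lebesgue (dcube k j) (\<lambda>x. \<bar>f x\<bar>)"
      using set_integrable_subset[OF integrable_on_cube _ dcube_subset_cube[OF assms]]
        dcube_lmeasurable
      by (intro set_integrable_abs) (auto simp: fmeasurableD)
    then show ?thesis
      unfolding abs_integral_def set_lebesgue_integral_def nn_integral_set_ennreal
      by (subst nn_integral_eq_integral) (simp_all add: mult_ac set_integrable_def)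
  qed
  finally show ?thesis .
qed

definition stopped_part :: "nat \<Rightarrow> ('n \<Rightarrow> nat) \<Rightarrow> (real^'n) set" where
  "stopped_part g jP = (\<Union>(k, j)\<in>stopping_children avg g jP. hcube k j)"

definition principal_core :: "nat \<Rightarrow> ('n \<Rightarrow> nat) \<Rightarrow> (real^'n) set" where
  "principal_core g jP = hcube g jP - stopped_part g jP"

definition principal_indices :: "(nat \<times> ('n \<Rightarrow> nat)) set" where
  "principal_indices = {(k, j). (\<forall>i. j i < 2 ^ k) \<and> principal_ancestor avg k j = (k, j)}"

lemma sets_mass [simp]: "sets mass = sets lebesgue"
  by (simp add: mass_def)

lemma hcube_stopping_child_subset:
  "(k, j) \<in> stopping_children avg g jP \<Longrightarrow> hcube k j \<subseteq> hcube g jP"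
  using hcube_ancestor[of _ k j g] stopping_child_descendant[of k j avg g jP] by auto

lemma stopped_part_subset: "stopped_part g jP \<subseteq> hcube g jP"
  unfolding stopped_part_def using hcube_stopping_child_subset by fast

lemma stopped_part_sets: "stopped_part g jP \<in> sets lebesgue"
  unfolding stopped_part_def by (intro sets.countable_UN' countableI_type) (auto simp: hcube_sets)

lemma stopping_children_disjoint:
  "disjoint_family_on (\<lambda>(k, j). hcube k j) (stopping_children avg g jP)"
proof -
  have nested: "False" if "(k1, j1) \<in> stopping_children avg g jP"
    "(k2, j2) \<in> stopping_children avg g jP" "k1 < k2" "x \<in> hcube k1 j1" "x \<in> hcube k2 j2"
    for k1 j1 k2 j2 x
    using stopping_children_not_nested[OF that(1-3)] hcube_index_eq[OF that(4,5)] that(3) by simp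
  have "hcube k1 j1 \<inter> hcube k2 j2 = {}"
    if "(k1, j1) \<in> stopping_children avg g jP" "(k2, j2) \<in> stopping_children avg g jP"
      "(k1, j1) \<noteq> (k2, j2)" for k1 j1 k2 j2
  proof (rule equals0I)
    fix x assume "x \<in> hcube k1 j1 \<inter> hcube k2 j2"
    then show False
      using that nested[of k1 j1 k2 j2 x] nested[of k2 j2 k1 j1 x] hcube_index_eq[of x k1 j1 k2 j2]
      by (cases k1 k2 rule: linorder_cases) auto
  qed
  then show ?thesis
    unfolding disjoint_family_on_def by fastforce
qed

lemma emeasure_stopping_children_le:
  assumes "\<forall>i. jP i < 2 ^ g"
  shows "ennreal (2 * avg g jP) * emeasure lebesgue (stopped_part g jP) \<le> ennreal (abs_integral g jP)"
proof -
  define C where "C = stopping_children avg g jP"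
  define H where "H = (\<lambda>(k, j). hcube k j)"
  have U: "stopped_part g jP = \<Union>(H ` C)"
    by (simp add: stopped_part_def H_def C_def)
  have H_sets: "H c \<in> sets lebesgue" "H c \<in> sets mass" for c
    by (simp_all add: H_def hcube_sets split: prod.split)
  have disj: "disjoint_family_on H C"
    unfolding H_def C_def by (rule stopping_children_disjoint)
  have "ennreal (2 * avg g jP) * emeasure lebesgue (stopped_part g jP)
      = (\<integral>\<^sup>+c. ennreal (2 * avg g jP) * emeasure lebesgue (H c) \<partial>count_space C)"
    unfolding U using H_sets disj
    by (simp add: emeasure_UN_countable[OF _ countableI_type] nn_integral_cmult)
  also have "\<dots> \<le> (\<integral>\<^sup>+c. emeasure mass (H c) \<partial>count_space C)"
  proof (rule nn_integral_mono)
    fix c assume "c \<in> space (count_space C)"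
    then obtain k j where c: "c = (k, j)" and child: "(k, j) \<in> stopping_children avg g jP"
      by (cases c) (simp add: C_def)
    have bounded: "\<forall>i. j i < 2 ^ k"
      using stopping_child_bounded[OF assms child] .
    have "2 * avg g jP * measure lebesgue (dcube k j) \<le> abs_integral k j"
      unfolding abs_integral_eq using stopping_child_avg_gt[OF child] measure_dcube_pos[of k j]
      by (intro mult_right_mono) auto
    then show "ennreal (2 * avg g jP) * emeasure lebesgue (H c) \<le> emeasure mass (H c)"
      using avg_nonneg[of g jP]
      by (simp add: c H_def emeasure_hcube emeasure_mass_hcube[OF bounded] ennreal_mult'[symmetric]
          ennreal_leI)
  qed
  also have "\<dots> = emeasure mass (stopped_part g jP)"
    unfolding U using H_sets disj by (simp add: emeasure_UN_countable[OF _ countableI_type])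
  also have "\<dots> \<le> emeasure mass (hcube g jP)"
    using stopped_part_subset hcube_sets by (intro emeasure_mono) simp_all
  finally show ?thesis
    using emeasure_mass_hcube[OF assms(1)] by simp
qed

lemma stopping_children_empty_if_avg_zero:
  assumes "\<forall>i. jP i < 2 ^ g" "avg g jP = 0"
  shows "stopping_children avg g jP = {}"
proof (rule ccontr)
  assume "stopping_children avg g jP \<noteq> {}"
  then obtain k j where child: "(k, j) \<in> stopping_children avg g jP"
    by auto
  have "0 < abs_integral k j"
    using stopping_child_avg_gt[OF child] assms(2) measure_dcube_pos[of k j]
    by (simp add: abs_integral_eq)
  moreover have "emeasure mass (hcube k j) \<le> emeasure mass (hcube g jP)"
    using hcube_stopping_child_subset[OF child] hcube_sets by (intro emeasure_mono) simp_all
  moreover have "abs_integral g jP = 0"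
    using assms(2) by (simp add: abs_integral_eq)
  ultimately show False
    by (simp add: emeasure_mass_hcube[OF assms(1)]
        emeasure_mass_hcube[OF stopping_child_bounded[OF assms(1) child]])
qed

lemma measure_stopped_part_le:
  assumes "\<forall>i. jP i < 2 ^ g"
  shows "measure lebesgue (stopped_part g jP) \<le> measure lebesgue (dcube g jP) / 2"
proof (cases "avg g jP = 0")
  case True
  then show ?thesis
    using stopping_children_empty_if_avg_zero[OF assms] measure_dcube_pos[of g jP]
    by (simp add: stopped_part_def)
next
  case False
  then have "0 < avg g jP"
    using avg_nonneg[of g jP] by simp
  have "emeasure lebesgue (stopped_part g jP) \<le> emeasure lebesgue (hcube g jP)"
    using stopped_part_subset hcube_sets by (intro emeasure_mono)
  then have finite: "emeasure lebesgue (stopped_part g jP) \<noteq> top"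
    by (auto simp: emeasure_hcube top_unique)
  have "ennreal (2 * avg g jP * measure lebesgue (stopped_part g jP))
      \<le> ennreal (avg g jP * measure lebesgue (dcube g jP))"
    using emeasure_stopping_children_le[OF assms] \<open>0 < avg g jP\<close>
    by (simp add: emeasure_eq_ennreal_measure[OF finite] abs_integral_eq ennreal_mult)
  then have "2 * avg g jP * measure lebesgue (stopped_part g jP) \<le> avg g jP * measure lebesgue (dcube g jP)"
    using \<open>0 < avg g jP\<close> measure_dcube_pos[of g jP] by (simp add: ennreal_le_iff)
  then show ?thesis
    using \<open>0 < avg g jP\<close> by (simp add: field_simps)
qed

lemma principal_core_sets: "principal_core g jP \<in> sets lebesgue"
  by (simp add: principal_core_def hcube_sets stopped_part_sets sets.Diff)

lemma principal_core_subset: "principal_core g jP \<subseteq> dcube g jP"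
  using hcube_subset_dcube by (auto simp: principal_core_def)

lemma measure_principal_core_ge:
  assumes "\<forall>i. jP i < 2 ^ g"
  shows "measure lebesgue (dcube g jP) / 2 \<le> measure lebesgue (principal_core g jP)"
proof -
  have "measure lebesgue (principal_core g jP)
      = measure lebesgue (hcube g jP) - measure lebesgue (stopped_part g jP)"
    unfolding principal_core_def
    using stopped_part_subset stopped_part_sets hcube_sets
    by (intro measure_Diff) (simp_all add: emeasure_hcube)
  moreover have "measure lebesgue (hcube g jP) = measure lebesgue (dcube g jP)"
    using emeasure_hcube by (simp add: measure_def)
  ultimately show ?thesis
    using measure_stopped_part_le[OF assms] by simp
qed

lemma principal_cores_disjoint:
  assumes "(g, jP) \<in> principal_indices" "(g', jP') \<in> principal_indices" "(g, jP) \<noteq> (g', jP')"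
  shows "principal_core g jP \<inter> principal_core g' jP' = {}"
proof -
  have False if "(g, jP) \<in> principal_indices" "(g', jP') \<in> principal_indices"
    "(g, jP) \<noteq> (g', jP')" "g \<le> g'" "x \<in> principal_core g jP" "x \<in> principal_core g' jP'"
    for g jP g' jP' x
  proof -
    have x: "x \<in> hcube g jP" "x \<in> hcube g' jP'" "x \<notin> stopped_part g jP"
      using that(5,6) by (auto simp: principal_core_def)
    have jP: "jP = (\<lambda>i. jP' i div 2 ^ (g' - g))"
      using hcube_index_eq[OF x(1,2) that(4)] .
    then have "g < g'"
      using that(3,4) by (cases "g = g'") auto
    moreover have "principal_ancestor avg g jP = (g, jP)" "principal_ancestor avg g' jP' = (g', jP')"
      using that(1,2) by (simp_all add: principal_indices_def)
    ultimately obtain m where "m \<le> g'" "(m, \<lambda>i. jP' i div 2 ^ (g' - m)) \<in> stopping_children avg g jP"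
      using exists_stopping_child_ancestor[of avg g jP g' jP'] jP by auto
    moreover have "x \<in> hcube m (\<lambda>i. jP' i div 2 ^ (g' - m))"
      using hcube_ancestor[OF x(2) \<open>m \<le> g'\<close>] .
    ultimately show False
      using x(3) by (auto simp: stopped_part_def)
  qed
  then show ?thesis
    using assms by (metis disjoint_iff nle_le)
qed

lemma sparse_principal_cubes: "sparse a l ((\<lambda>(k, j). dcube k j) ` principal_indices)"
proof (rule sparse_image[where E = "\<lambda>(k, j). principal_core k j"], goal_cases)
  case 1
  show ?case by (rule countableI_type)
next
  case 2
  show ?case by (auto simp: dyadic_cubes_eq principal_indices_def)
next
  case (3 c)
  then obtain k j where "c = (k, j)" "\<forall>i. j i < 2 ^ k"
    by (auto simp: principal_indices_def)
  then show ?case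
    using principal_core_sets principal_core_subset measure_principal_core_ge by simp
next
  case (4 c c')
  then show ?case
    using principal_cores_disjoint[of "fst c" "snd c" "fst c'" "snd c'"] by (simp add: case_prod_beta)
qed

lemma principal_ancestor_in_indices:
  assumes "\<forall>i. j i < 2 ^ k"
  shows "principal_ancestor avg k j \<in> principal_indices"
proof -
  obtain g jP where P: "principal_ancestor avg k j = (g, jP)"
    by fastforce
  then have "g \<le> k" "jP = (\<lambda>i. j i div 2 ^ (k - g))"
    using principal_ancestor_is_ancestor[of avg k j] by auto
  then have "\<forall>i. jP i < 2 ^ g"
    using assms ancestor_index_bounded_iff[of g k j] by simp
  moreover have "principal_ancestor avg g jP = (g, jP)"
    using principal_ancestor_idem[of avg k j] by (simp add: P)
  ultimately show ?thesis
    by (simp add: P principal_indices_def)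
qed

lemma dyadic_term_le_principal_term:
  assumes "1 \<le> p" "p \<le> q" "p = q \<Longrightarrow> \<alpha> \<le> 0"
    and P: "principal_ancestor avg k j = (g, jP)"
  defines "mQ \<equiv> measure lebesgue (dcube k j)" and "mP \<equiv> measure lebesgue (dcube g jP)"
  shows "mQ powr (1/p - 1/q - 1) * (1 - negpart (ln mQ)) powr \<alpha> * abs_integral k j
    \<le> sparse_const p q \<alpha> * ((1 - negpart (ln mP)) powr \<alpha> / mP powr ((1 - 1/p) + 1/q) * abs_integral g jP)"
proof -
  define \<beta> where "\<beta> = 1/p - 1/q"
  have "g \<le> k" "jP = (\<lambda>i. j i div 2 ^ (k - g))"
    using principal_ancestor_is_ancestor[of avg k j] by (auto simp: P)
  then have "mQ \<le> mP"
    unfolding mQ_def mP_def using dcube_ancestor[of g k j] dcube_lmeasurable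
    by (intro measure_mono_fmeasurable) (auto intro: fmeasurableD)
  have "0 < mQ"
    using measure_dcube_pos by (simp add: mQ_def)
  have "mQ powr (\<beta> - 1) * (1 - negpart (ln mQ)) powr \<alpha> * abs_integral k j
      = log_weight \<beta> \<alpha> mQ * avg k j"
    using \<open>0 < mQ\<close> by (simp add: log_weight_times_average avg_def mQ_def)
  also have "\<dots> \<le> log_weight \<beta> \<alpha> mQ * (2 * avg g jP)"
    using avg_le_principal_ancestor[of avg k j, OF avg_nonneg] log_weight_nonneg
    by (intro mult_left_mono) (simp_all add: P)
  also have "\<dots> \<le> (sparse_const p q \<alpha> / 2 * log_weight \<beta> \<alpha> mP) * (2 * avg g jP)"
    using log_weight_le_sparse_const[OF assms(1-3) \<open>0 < mQ\<close> \<open>mQ \<le> mP\<close>] avg_nonneg[of g jP]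
    by (intro mult_right_mono) (simp_all add: \<beta>_def)
  also have "\<dots> = sparse_const p q \<alpha> * (log_weight \<beta> \<alpha> mP * avg g jP)"
    by simp
  also have "\<dots> = sparse_const p q \<alpha> *
      ((1 - negpart (ln mP)) powr \<alpha> / mP powr ((1 - 1/p) + 1/q) * abs_integral g jP)"
    using log_weight_times_average'[OF measure_dcube_pos[of g jP], of \<alpha> p q "abs_integral g jP"]
    by (simp add: avg_def mP_def \<beta>_def)
  finally show ?thesis
    by (simp add: \<beta>_def)
qed

lemma max_op_le_principal_sum:
  assumes "1 \<le> p" "p \<le> q" "p = q \<Longrightarrow> \<alpha> \<le> 0"
  shows "max_op (real CARD('n) * (1/p - 1/q)) \<alpha> a l f x
    \<le> ennreal (sparse_const p q \<alpha>) *
       (\<integral>\<^sup>+Q. ennreal ((1 - negpart (ln (measure lebesgue Q))) powr \<alpha>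
                / measure lebesgue Q powr ((1 - 1/p) + 1/q)
                * (LINT y:Q|lebesgue. \<bar>f y\<bar>) * indicator Q x)
        \<partial>count_space ((\<lambda>(k, j). dcube k j) ` principal_indices))"
    (is "_ \<le> ennreal ?K * (\<integral>\<^sup>+Q. ennreal (?T Q) \<partial>count_space ?S)")
proof -
  have exponent: "real CARD('n) * (1/p - 1/q) / real CARD('n) - 1 = 1/p - 1/q - 1"
    by simp
  show ?thesis
    unfolding max_op_def exponent
  proof (rule SUP_least, clarify)
    fix Q assume "Q \<in> dyadic_cubes a l" "x \<in> Q"
    then obtain k j where Q: "Q = dcube k j" "\<forall>i. j i < 2 ^ k" "x \<in> dcube k j"
      by (auto simp: dyadic_cubes_eq)
    obtain g jP where P: "principal_ancestor avg k j = (g, jP)"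
      by fastforce
    then have "dcube g jP \<in> ?S"
      using principal_ancestor_in_indices[OF Q(2)] by force
    have "x \<in> dcube g jP"
      using principal_ancestor_is_ancestor[of avg k j] dcube_ancestor Q(3) by (auto simp: P)
    have "?K \<ge> 0"
      using sparse_const_ge_two[of p q \<alpha>] by simp
    have "ennreal (measure lebesgue Q powr (1/p - 1/q - 1) * (1 - negpart (ln (measure lebesgue Q))) powr \<alpha>
          * (LINT y:Q|lebesgue. \<bar>f y\<bar>)) \<le> ennreal (?K * ?T (dcube g jP))"
      using dyadic_term_le_principal_term[OF assms P] \<open>x \<in> dcube g jP\<close>
      by (intro ennreal_leI) (simp add: Q abs_integral_def)
    also have "\<dots> = ennreal ?K * ennreal (?T (dcube g jP))"
      using \<open>?K \<ge> 0\<close> by (rule ennreal_mult')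
    also have "\<dots> \<le> ennreal ?K * (\<integral>\<^sup>+Q. ennreal (?T Q) \<partial>count_space ?S)"
      using nn_integral_count_space_ge_point[OF \<open>dcube g jP \<in> ?S\<close>] by (rule mult_left_mono) simp
    finally show "ennreal (measure lebesgue Q powr (1/p - 1/q - 1)
          * (1 - negpart (ln (measure lebesgue Q))) powr \<alpha> * (LINT y:Q|lebesgue. \<bar>f y\<bar>))
        \<le> ennreal ?K * (\<integral>\<^sup>+Q. ennreal (?T Q) \<partial>count_space ?S)" .
  qed
qed

end

theorem proposition3p3:
  fixes p q \<alpha> l :: real and a :: "real^'n" and f :: "real^'n \<Rightarrow> real"
  assumes "1 \<le> p" "p \<le> q"
    and "p = q \<Longrightarrow> \<alpha> \<le> 0"
    and "l > 0"
    and "set_integrable lebesgue (cube a l) f"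
  shows "\<exists>S. sparse a l S \<and>
    (AE x in lebesgue. x \<in> cube a l \<longrightarrow>
       max_op (real CARD('n) * (1/p - 1/q)) \<alpha> a l f x
       \<le> ennreal (sparse_const p q \<alpha>) *
         (\<integral>\<^sup>+ Q. ennreal ((1 - negpart (ln (measure lebesgue Q))) powr \<alpha>
                     / measure lebesgue Q powr ((1 - 1/p) + 1/q)
                     * (LINT y:Q|lebesgue. \<bar>f y\<bar>) * indicator Q x) \<partial>count_space S))"
proof -
  interpret dyadic_grid_integrable a l f
    using assms(4,5) by unfold_locales
  show ?thesis
    using sparse_principal_cubes max_op_le_principal_sum[OF assms(1-3)]
    by (intro exI[of _ "(\<lambda>(k, j). dcube k j) ` principal_indices"] conjI AE_I2 impI)
qed

end
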